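(* Let $I=(N,A,V)$ be an instance with $n=|N|$ agents and additive valuations with externalities. Suppose there is a set $A^t\subseteq A$ of items all of the same type, with $|A^t|$ divisible by $n$. If the reduced instance $I'=(N,A\setminus A^t,V)$ admits an EF1 complete allocation, then $I$ admits an EF1 complete allocation.
   Context: An allocation $\pi=(\pi_1,\dots,\pi_n)$ consists of pairwise disjoint bundles (complete if they cover the item set); $\pi(a)$ is the agent receiving item $a$; $V_i(j,a)\in\mathbb{R}$ is agent $i$'s value when item $a$ goes to $j$; $V_i(\pi)=\sum_{a\text{ assigned in }\pi}V_i(\pi(a),a)$; $\pi^{i\leftrightarrow j}$ swaps the bundles of $i$ and $j$. A complete allocation $\pi$ is EF1 if for all $i,j\in N$ there exist $C$ with $|C|\le1$ and the allocation $\lambda$ with $\lambda_\ell=\pi_\ell\setminus C$ for all $\ell$ such that $V_i(\lambda)\ge V_i(\lambda^{i\leftrightarrow j})$. Let $\Delta_{ij}(a)=V_i(i,a)-V_i(j,a)$. Two items $a,b$ are of the same type if $\Delta_{ij}(a)=\Delta_{ij}(b)$ for all $i,j\in N$. *)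

theory Defs
  imports Complex_Main
begin

text \<open>Agents of type 'a, items of type 'b. An allocation is a family of bundles
  \<pi> :: 'a => 'b set (only the bundles of agents in N matter).
  V i j a is agent i's value when item a goes to agent j.\<close>

definition is_allocation :: "'a set \<Rightarrow> 'b set \<Rightarrow> ('a \<Rightarrow> 'b set) \<Rightarrow> bool" where
  "is_allocation N A \<pi> \<longleftrightarrow>
     (\<forall>i\<in>N. \<pi> i \<subseteq> A) \<and> (\<forall>i\<in>N. \<forall>j\<in>N. i \<noteq> j \<longrightarrow> \<pi> i \<inter> \<pi> j = {})"

definition complete_alloc :: "'a set \<Rightarrow> 'b set \<Rightarrow> ('a \<Rightarrow> 'b set) \<Rightarrow> bool" where
  "complete_alloc N A \<pi> \<longleftrightarrow> is_allocation N A \<pi> \<and> (\<Union>i\<in>N. \<pi> i) = A"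

definition alloc_val :: "'a set \<Rightarrow> ('a \<Rightarrow> 'a \<Rightarrow> 'b \<Rightarrow> real) \<Rightarrow> 'a \<Rightarrow> ('a \<Rightarrow> 'b set) \<Rightarrow> real" where
  "alloc_val N V i \<pi> = (\<Sum>j\<in>N. \<Sum>a\<in>\<pi> j. V i j a)"

definition swap_bundles :: "('a \<Rightarrow> 'b set) \<Rightarrow> 'a \<Rightarrow> 'a \<Rightarrow> ('a \<Rightarrow> 'b set)" where
  "swap_bundles \<pi> i j = \<pi>(i := \<pi> j, j := \<pi> i)"

definition EF1 :: "'a set \<Rightarrow> ('a \<Rightarrow> 'a \<Rightarrow> 'b \<Rightarrow> real) \<Rightarrow> ('a \<Rightarrow> 'b set) \<Rightarrow> bool" where
  "EF1 N V \<pi> \<longleftrightarrow>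
     (\<forall>i\<in>N. \<forall>j\<in>N. \<exists>C. finite C \<and> card C \<le> 1 \<and>
        (let lam = (\<lambda>l. \<pi> l - C) in
           alloc_val N V i lam \<ge> alloc_val N V i (swap_bundles lam i j)))"

definition Delta :: "('a \<Rightarrow> 'a \<Rightarrow> 'b \<Rightarrow> real) \<Rightarrow> 'a \<Rightarrow> 'a \<Rightarrow> 'b \<Rightarrow> real" where
  "Delta V i j a = V i i a - V i j a"

definition same_type :: "'a set \<Rightarrow> ('a \<Rightarrow> 'a \<Rightarrow> 'b \<Rightarrow> real) \<Rightarrow> 'b \<Rightarrow> 'b \<Rightarrow> bool" where
  "same_type N V a b \<longleftrightarrow> (\<forall>i\<in>N. \<forall>j\<in>N. Delta V i j a = Delta V i j b)"

end

theory Submission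
  imports Defs
begin

text \<open>Split the items of the common type into \<open>n\<close> bundles of equal size and add one to
  each agent's bundle of an EF1 allocation of the remaining items. Since all these items have
  the same \<open>\<Delta>\<close>-profile, agent \<open>i\<close> gains exactly as much from her own new bundle as she would
  from \<open>j\<close>'s, so no comparison between \<open>i\<close> and \<open>j\<close> changes; the item removed to witness EF1
  in the reduced instance still witnesses it.\<close>

lemma alloc_val_split:
  assumes "\<And>l. l \<in> N \<Longrightarrow> \<rho> l = \<pi> l \<union> \<sigma> l"
    and "\<And>l. l \<in> N \<Longrightarrow> \<pi> l \<inter> \<sigma> l = {}"
    and "\<And>l. l \<in> N \<Longrightarrow> finite (\<pi> l) \<and> finite (\<sigma> l)"
  shows "alloc_val N V i \<rho> = alloc_val N V i \<pi> + alloc_val N V i \<sigma>"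
  unfolding alloc_val_def sum.distrib[symmetric]
  using assms by (intro sum.cong refl) (simp add: sum.union_disjoint)

lemma alloc_val_minus_swap:
  assumes "finite N" "i \<in> N" "j \<in> N" "i \<noteq> j"
  shows "alloc_val N V i \<pi> - alloc_val N V i (swap_bundles \<pi> i j)
    = (\<Sum>a\<in>\<pi> i. Delta V i j a) - (\<Sum>a\<in>\<pi> j. Delta V i j a)"
proof -
  let ?R = "N - {i, j}"
  have N: "N = insert i (insert j ?R)" using assms by auto
  have "alloc_val N V i \<pi>
      = (\<Sum>a\<in>\<pi> i. V i i a) + ((\<Sum>a\<in>\<pi> j. V i j a) + (\<Sum>l\<in>?R. \<Sum>a\<in>\<pi> l. V i l a))"
    unfolding alloc_val_def using assms by (subst N, simp)
  moreover have "alloc_val N V i (swap_bundles \<pi> i j)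
      = (\<Sum>a\<in>\<pi> j. V i i a) + ((\<Sum>a\<in>\<pi> i. V i j a) + (\<Sum>l\<in>?R. \<Sum>a\<in>\<pi> l. V i l a))"
    unfolding alloc_val_def swap_bundles_def using assms by (subst N, simp)
  ultimately show ?thesis unfolding Delta_def by (simp add: sum_subtractf)
qed

definition swap_indifferent :: "'a set \<Rightarrow> ('a \<Rightarrow> 'a \<Rightarrow> 'b \<Rightarrow> real) \<Rightarrow> ('a \<Rightarrow> 'b set) \<Rightarrow> bool" where
  "swap_indifferent N V \<sigma> \<longleftrightarrow>
     (\<forall>i\<in>N. \<forall>j\<in>N. alloc_val N V i (swap_bundles \<sigma> i j) = alloc_val N V i \<sigma>)"

lemma sum_Delta_same_type_card_eq:
  assumes "\<forall>a\<in>B. \<forall>b\<in>B. same_type N V a b" "i \<in> N" "j \<in> N"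
    and "S \<subseteq> B" "T \<subseteq> B" "card S = card T"
  shows "(\<Sum>a\<in>S. Delta V i j a) = (\<Sum>a\<in>T. Delta V i j a)"
proof (cases "B = {}")
  case False
  then obtain b where b: "b \<in> B" by blast
  have "(\<Sum>a\<in>U. Delta V i j a) = of_nat (card U) * Delta V i j b" if "U \<subseteq> B" for U
  proof -
    have "Delta V i j a = Delta V i j b" if "a \<in> U" for a
      using assms(1-3) b \<open>U \<subseteq> B\<close> that unfolding same_type_def by blast
    then show ?thesis by simp
  qed
  then show ?thesis using assms(4-6) by metis
next
  case True
  then show ?thesis using assms(4,5) by simp
qed

lemma swap_indifferent_same_type:
  assumes "finite N" "\<forall>a\<in>B. \<forall>b\<in>B. same_type N V a b"
    and "\<And>l. l \<in> N \<Longrightarrow> \<sigma> l \<subseteq> B"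
    and "\<And>l m. l \<in> N \<Longrightarrow> m \<in> N \<Longrightarrow> card (\<sigma> l) = card (\<sigma> m)"
  shows "swap_indifferent N V \<sigma>"
  unfolding swap_indifferent_def
proof (intro ballI)
  fix i j assume i: "i \<in> N" and j: "j \<in> N"
  show "alloc_val N V i (swap_bundles \<sigma> i j) = alloc_val N V i \<sigma>"
  proof (cases "i = j")
    case False
    have "(\<Sum>a\<in>\<sigma> i. Delta V i j a) = (\<Sum>a\<in>\<sigma> j. Delta V i j a)"
      using assms(3)[OF i] assms(3)[OF j] assms(4)[OF i j]
      by (rule sum_Delta_same_type_card_eq[OF assms(2) i j])
    then show ?thesis using alloc_val_minus_swap[OF assms(1) i j False, of V \<sigma>] by linarith
  qed (simp add: swap_bundles_def)
qed

lemma exists_equal_partition: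
  assumes "finite N" "finite B" "card N dvd card B"
  shows "\<exists>\<sigma>. complete_alloc N B \<sigma> \<and> (\<forall>i\<in>N. card (\<sigma> i) = card B div card N)"
proof -
  define k where "k = card B div card N"
  have "card (N \<times> {..<k}) = card B"
    using assms(3) unfolding k_def by (simp add: card_cartesian_product)
  then obtain g where g: "bij_betw g (N \<times> {..<k}) B"
    using finite_same_card_bij[of "N \<times> {..<k}" B] assms(1,2) by auto
  then have inj: "inj_on g (N \<times> {..<k})" and img: "g ` (N \<times> {..<k}) = B"
    unfolding bij_betw_def by auto
  define \<sigma> where "\<sigma> i = g ` ({i} \<times> {..<k})" for i
  have "\<sigma> i \<inter> \<sigma> j = {}" if "i \<in> N" "j \<in> N" "i \<noteq> j" for i j
    using that inj unfolding \<sigma>_def inj_on_def by auto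
  moreover have "(\<Union>i\<in>N. \<sigma> i) = B"
    using img unfolding \<sigma>_def by auto
  moreover have "\<sigma> i \<subseteq> B" if "i \<in> N" for i
    using that img unfolding \<sigma>_def by auto
  ultimately have "complete_alloc N B \<sigma>"
    unfolding complete_alloc_def is_allocation_def by simp
  moreover have "card (\<sigma> i) = k" if "i \<in> N" for i
  proof -
    have "card (\<sigma> i) = card ({i} \<times> {..<k})"
      unfolding \<sigma>_def using that by (intro card_image inj_on_subset[OF inj]) auto
    then show ?thesis by (simp add: card_cartesian_product)
  qed
  ultimately show ?thesis unfolding k_def by blast
qed

lemma complete_alloc_Un:
  assumes "complete_alloc N A \<pi>" "complete_alloc N B \<sigma>" "A \<inter> B = {}"
  shows "complete_alloc N (A \<union> B) (\<lambda>l. \<pi> l \<union> \<sigma> l)"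
  unfolding complete_alloc_def is_allocation_def
proof (intro conjI ballI impI)
  have sub: "\<pi> i \<subseteq> A" "\<sigma> i \<subseteq> B" if "i \<in> N" for i
    using assms(1,2) that unfolding complete_alloc_def is_allocation_def by auto
  then show "\<pi> i \<union> \<sigma> i \<subseteq> A \<union> B" if "i \<in> N" for i
    using that by blast
  show "(\<pi> i \<union> \<sigma> i) \<inter> (\<pi> j \<union> \<sigma> j) = {}" if "i \<in> N" "j \<in> N" "i \<noteq> j" for i j
  proof -
    have "\<pi> i \<inter> \<pi> j = {}" "\<sigma> i \<inter> \<sigma> j = {}"
      using assms(1,2) that unfolding complete_alloc_def is_allocation_def by auto
    then show ?thesis using sub[OF that(1)] sub[OF that(2)] assms(3) by blast
  qed
  show "(\<Union>i\<in>N. \<pi> i \<union> \<sigma> i) = A \<union> B"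
    using assms(1,2) unfolding complete_alloc_def by blast
qed

lemma EF1_Un_swap_indifferent:
  assumes "finite A" "finite B" "A \<inter> B = {}"
    and "is_allocation N A \<pi>" "is_allocation N B \<sigma>"
    and "EF1 N V \<pi>" "swap_indifferent N V \<sigma>"
  shows "EF1 N V (\<lambda>l. \<pi> l \<union> \<sigma> l)"
  unfolding EF1_def Let_def
proof (intro ballI)
  fix i j assume i: "i \<in> N" and j: "j \<in> N"
  obtain C where C: "finite C" "card C \<le> 1" and
    envy: "alloc_val N V i (swap_bundles (\<lambda>l. \<pi> l - C) i j) \<le> alloc_val N V i (\<lambda>l. \<pi> l - C)"
    using assms(6) i j unfolding EF1_def Let_def by blast
  define lam where "lam l = \<pi> l - C" for l
  \<comment> \<open>Items of \<open>C\<close> in \<open>B\<close> did not matter for \<open>\<pi>\<close>, but removing them would unbalance \<open>\<sigma>\<close>.\<close>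
  define lam' where "lam' l = (\<pi> l \<union> \<sigma> l) - (C - B)" for l
  have lam'_split: "lam' l = lam l \<union> \<sigma> l" "lam l \<inter> \<sigma> l = {}" "finite (lam l) \<and> finite (\<sigma> l)"
    if "l \<in> N" for l
  proof -
    have "\<pi> l \<subseteq> A" "\<sigma> l \<subseteq> B"
      using assms(4,5) that unfolding is_allocation_def by auto
    then show "lam' l = lam l \<union> \<sigma> l" "lam l \<inter> \<sigma> l = {}" "finite (lam l) \<and> finite (\<sigma> l)"
      using assms(1-3) unfolding lam_def lam'_def by (auto intro: finite_subset)
  qed
  have swap_lam'_split: "swap_bundles lam' i j l = swap_bundles lam i j l \<union> swap_bundles \<sigma> i j l"
    "swap_bundles lam i j l \<inter> swap_bundles \<sigma> i j l = {}"
    "finite (swap_bundles lam i j l) \<and> finite (swap_bundles \<sigma> i j l)"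
    if "l \<in> N" for l
    using lam'_split[OF i] lam'_split[OF j] lam'_split[OF that] unfolding swap_bundles_def by simp_all
  have "alloc_val N V i (swap_bundles lam' i j)
      = alloc_val N V i (swap_bundles lam i j) + alloc_val N V i (swap_bundles \<sigma> i j)"
    using swap_lam'_split by (rule alloc_val_split)
  also have "\<dots> \<le> alloc_val N V i lam + alloc_val N V i \<sigma>"
    using envy assms(7) i j unfolding lam_def swap_indifferent_def by simp
  also have "\<dots> = alloc_val N V i lam'"
    using lam'_split by (rule alloc_val_split[symmetric])
  finally have "alloc_val N V i (swap_bundles lam' i j) \<le> alloc_val N V i lam'" .
  moreover have "finite (C - B)" "card (C - B) \<le> 1"
    using C by (auto intro: le_trans[OF card_mono])
  ultimately show "\<exists>C'. finite C' \<and> card C' \<le> 1 \<and>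
      alloc_val N V i (swap_bundles (\<lambda>l. \<pi> l \<union> \<sigma> l - C') i j)
        \<le> alloc_val N V i (\<lambda>l. \<pi> l \<union> \<sigma> l - C')"
    unfolding lam'_def by blast
qed

theorem lemma3:
  fixes N :: "'a set" and A At :: "'b set" and V :: "'a \<Rightarrow> 'a \<Rightarrow> 'b \<Rightarrow> real"
  assumes "finite N" and "finite A"
    and "At \<subseteq> A"
    and "\<forall>a\<in>At. \<forall>b\<in>At. same_type N V a b"
    and "card N dvd card At"
    and "\<exists>\<pi>. complete_alloc N (A - At) \<pi> \<and> EF1 N V \<pi>"
  shows "\<exists>\<pi>. complete_alloc N A \<pi> \<and> EF1 N V \<pi>"
proof -
  obtain \<pi> where \<pi>: "complete_alloc N (A - At) \<pi>" and EF1: "EF1 N V \<pi>"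
    using assms(6) by blast
  have "finite At" using assms(2,3) finite_subset by blast
  then obtain \<sigma> where \<sigma>: "complete_alloc N At \<sigma>"
    and card: "\<forall>i\<in>N. card (\<sigma> i) = card At div card N"
    using exists_equal_partition assms(1,5) by blast
  have "swap_indifferent N V \<sigma>"
    using \<sigma> card assms(1,4)
    by (intro swap_indifferent_same_type) (auto simp: complete_alloc_def is_allocation_def)
  then have EF1': "EF1 N V (\<lambda>l. \<pi> l \<union> \<sigma> l)"
    using \<pi> \<sigma> EF1 \<open>finite At\<close> assms(2)
    by (intro EF1_Un_swap_indifferent[where A = "A - At" and B = At])
       (auto simp: complete_alloc_def)
  have "complete_alloc N (A - At \<union> At) (\<lambda>l. \<pi> l \<union> \<sigma> l)"
    using complete_alloc_Un[OF \<pi> \<sigma>] by blast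
  then have "complete_alloc N A (\<lambda>l. \<pi> l \<union> \<sigma> l)"
    using assms(3) by (simp add: Un_absorb2)
  with EF1' show ?thesis by blast
qed

end
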